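(* Let $X$ be a space with a binary normal closed subbase $\mathcal S$, let $Z$ be an arbitrary space, and let $\Phi\colon Z\to X$ be an $\mathcal S$-continuous set-valued map such that each $\Phi(z)\subset X$ is (nonempty and) closed. Then the set-valued map $\Psi\colon Z\to X$, $\Psi(z)=I_{\mathcal S}(\Phi(z))$, has a continuous single-valued selection, i.e. a continuous $h\colon Z\to X$ with $h(z)\in\Psi(z)$ for all $z\in Z$.
   Context: All spaces are Tychonoff; set-valued maps have nonempty values. A family $\mathcal S$ of closed subsets of $X$ is a closed subbase if every closed subset of $X$ is an intersection of finite unions of members of $\mathcal S$. A family of sets is linked if any two members intersect; $\mathcal S$ is binary if every linked subfamily of $\mathcal S$ has nonempty intersection. $\mathcal S$ is normal if for every disjoint $S_0,S_1\in\mathcal S$ there exist $T_0,T_1\in\mathcal S$ with $S_0\cap T_1=\varnothing=T_0\cap S_1$ and $T_0\cup T_1=X$. For $B\subset X$, $I_{\mathcal S}(B)=\bigcap\{S\in\mathcal S:B\subset S\}$. A set-valued map $\Phi\colon Z\to X$ is $\mathcal S$-continuous if for every $S\in\mathcal S$ both $\{z:\Phi(z)\cap(X\setminus S)\neq\varnothing\}$ and $\{z:\Phi(z)\subset X\setminus S\}$ are open in $Z$. *)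

theory Defs
  imports "HOL-Analysis.Analysis"
begin

definition tychonoff_space :: "'a topology \<Rightarrow> bool" where
  "tychonoff_space X \<longleftrightarrow> completely_regular_space X \<and> Hausdorff_space X"

definition closed_subbase :: "'a topology \<Rightarrow> 'a set set \<Rightarrow> bool" where
  "closed_subbase X \<S> \<longleftrightarrow>
     (\<forall>S\<in>\<S>. closedin X S) \<and>
     (\<forall>C. closedin X C \<longrightarrow>
        (\<exists>\<U>. (\<forall>U\<in>\<U>. \<exists>\<F>. finite \<F> \<and> \<F> \<subseteq> \<S> \<and> U = \<Union>\<F>) \<and>
              C = topspace X \<inter> \<Inter>\<U>))"

definition linked :: "'a set set \<Rightarrow> bool" where
  "linked \<F> \<longleftrightarrow> (\<forall>A\<in>\<F>. \<forall>B\<in>\<F>. A \<inter> B \<noteq> {})"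

definition binary_family :: "'a set set \<Rightarrow> bool" where
  "binary_family \<S> \<longleftrightarrow> (\<forall>\<F>. \<F> \<subseteq> \<S> \<and> \<F> \<noteq> {} \<and> linked \<F> \<longrightarrow> \<Inter>\<F> \<noteq> {})"

definition normal_family :: "'a topology \<Rightarrow> 'a set set \<Rightarrow> bool" where
  "normal_family X \<S> \<longleftrightarrow>
     (\<forall>S0\<in>\<S>. \<forall>S1\<in>\<S>. S0 \<inter> S1 = {} \<longrightarrow>
        (\<exists>T0\<in>\<S>. \<exists>T1\<in>\<S>. S0 \<inter> T1 = {} \<and> T0 \<inter> S1 = {} \<and> T0 \<union> T1 = topspace X))"

definition I_S :: "'a topology \<Rightarrow> 'a set set \<Rightarrow> 'a set \<Rightarrow> 'a set" where
  "I_S X \<S> B = topspace X \<inter> \<Inter>{S\<in>\<S>. B \<subseteq> S}"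

definition S_continuous ::
  "'z topology \<Rightarrow> 'a topology \<Rightarrow> 'a set set \<Rightarrow> ('z \<Rightarrow> 'a set) \<Rightarrow> bool" where
  "S_continuous Z X \<S> \<Phi> \<longleftrightarrow>
     (\<forall>S\<in>\<S>. openin Z {z\<in>topspace Z. \<Phi> z \<inter> (topspace X - S) \<noteq> {}} \<and>
             openin Z {z\<in>topspace Z. \<Phi> z \<subseteq> topspace X - S})"

end

theory Submission
  imports Defs
begin

text \<open>Fix a base point \<open>p\<close>. For a nonempty \<open>B\<close>, the subbase members that either contain \<open>B\<close>,
  or contain \<open>p\<close> and meet \<open>B\<close>, form a linked family; by binarity it has a common point, and
  normality makes this point unique. This gate of \<open>B\<close> lies in \<open>I\<^sub>\<S>(B)\<close>. Whenever
  \<open>T\<^sub>0 \<union> T\<^sub>1 = X\<close>, one of \<open>T\<^sub>0, T\<^sub>1\<close> belongs to the family, and for \<open>B = \<Phi>(z)\<close> the conditions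
  deciding this are open in \<open>z\<close> by \<open>\<S>\<close>-continuity; so the gate of \<open>\<Phi>(z)\<close> depends continuously
  on \<open>z\<close>.\<close>

lemma closed_subbaseD:
  assumes "closed_subbase X \<S>" "closedin X C"
  obtains \<U> where "\<forall>U\<in>\<U>. \<exists>\<F>. finite \<F> \<and> \<F> \<subseteq> \<S> \<and> U = \<Union>\<F>" "C = topspace X \<inter> \<Inter>\<U>"
  using assms unfolding closed_subbase_def by meson

lemma closed_subbase_closedin: "closed_subbase X \<S> \<Longrightarrow> S \<in> \<S> \<Longrightarrow> closedin X S"
  unfolding closed_subbase_def by blast

lemma binary_familyD: "binary_family \<S> \<Longrightarrow> \<F> \<subseteq> \<S> \<Longrightarrow> \<F> \<noteq> {} \<Longrightarrow> linked \<F> \<Longrightarrow> \<Inter>\<F> \<noteq> {}"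
  unfolding binary_family_def by blast

lemma normal_familyD:
  assumes "normal_family X \<S>" "S0 \<in> \<S>" "S1 \<in> \<S>" "S0 \<inter> S1 = {}"
  obtains T0 T1 where "T0 \<in> \<S>" "T1 \<in> \<S>" "S0 \<inter> T1 = {}" "T0 \<inter> S1 = {}" "T0 \<union> T1 = topspace X"
  using assms unfolding normal_family_def by meson

lemma continuous_map_closed_subbase:
  assumes "closed_subbase X \<S>" "f \<in> topspace Z \<rightarrow> topspace X"
    and "\<And>S. S \<in> \<S> \<Longrightarrow> closedin Z {z \<in> topspace Z. f z \<in> S}"
  shows "continuous_map Z X f"
  unfolding continuous_map_closedin
proof (intro conjI allI impI)
  show "f \<in> topspace Z \<rightarrow> topspace X" by fact
  fix C assume "closedin X C"
  then obtain \<U> where \<U>: "\<forall>U\<in>\<U>. \<exists>\<F>. finite \<F> \<and> \<F> \<subseteq> \<S> \<and> U = \<Union>\<F>"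
    and C: "C = topspace X \<inter> \<Inter>\<U>"
    by (rule closed_subbaseD[OF assms(1)])
  have closed_U: "closedin Z {z \<in> topspace Z. f z \<in> U}" if U: "U \<in> \<U>" for U
  proof -
    obtain \<F> where \<F>: "finite \<F>" "\<F> \<subseteq> \<S>" "U = \<Union>\<F>" using \<U> U by meson
    have "{z \<in> topspace Z. f z \<in> U} = (\<Union>S\<in>\<F>. {z \<in> topspace Z. f z \<in> S})"
      using \<F>(3) by auto
    also have "closedin Z \<dots>" using \<F> assms(3) by (intro closedin_Union) auto
    finally show ?thesis .
  qed
  have "{z \<in> topspace Z. f z \<in> C} = topspace Z \<inter> (\<Inter>U\<in>\<U>. {z \<in> topspace Z. f z \<in> U})"
    using assms(2) unfolding C by blast
  also have "closedin Z \<dots>"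
  proof (cases "\<U> = {}")
    case False
    then show ?thesis using closed_U by (intro closedin_Int closedin_INT) auto
  qed simp
  finally show "closedin Z {z \<in> topspace Z. f z \<in> C}" .
qed

lemma closed_subbase_separating:
  assumes "closed_subbase X \<S>" "t1_space X" "x \<in> topspace X" "y \<in> topspace X" "x \<noteq> y"
  obtains S where "S \<in> \<S>" "y \<in> S" "x \<notin> S"
proof -
  obtain \<U> where \<U>: "\<forall>U\<in>\<U>. \<exists>\<F>. finite \<F> \<and> \<F> \<subseteq> \<S> \<and> U = \<Union>\<F>"
    and y: "{y} = topspace X \<inter> \<Inter>\<U>"
    by (rule closed_subbaseD[OF assms(1) closedin_t1_singleton[OF assms(2,4)]])
  have "y \<in> topspace X \<inter> \<Inter>\<U>" "x \<notin> topspace X \<inter> \<Inter>\<U>"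
    unfolding y[symmetric] using assms(5) by auto
  then obtain U where U: "U \<in> \<U>" "x \<notin> U" "y \<in> U" using assms(3) by auto
  obtain \<F> where "\<F> \<subseteq> \<S>" "U = \<Union>\<F>" using \<U> U(1) by meson
  with U obtain S where "S \<in> \<S>" "y \<in> S" "x \<notin> S" by auto
  then show thesis by (rule that)
qed

lemma binary_subbase_separating_disjoint:
  assumes "closed_subbase X \<S>" "t1_space X" "binary_family \<S>"
    and "x \<in> topspace X" "S \<in> \<S>" "x \<notin> S" "S \<noteq> {}"
  obtains T where "T \<in> \<S>" "x \<in> T" "T \<inter> S = {}"
proof -
  have "\<exists>T\<in>\<S>. x \<in> T \<and> T \<inter> S = {}"
  proof (rule ccontr)
    assume no_T: "\<not> (\<exists>T\<in>\<S>. x \<in> T \<and> T \<inter> S = {})"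
    obtain \<U> where \<U>: "\<forall>U\<in>\<U>. \<exists>\<F>. finite \<F> \<and> \<F> \<subseteq> \<S> \<and> U = \<Union>\<F>"
      and x: "{x} = topspace X \<inter> \<Inter>\<U>"
      by (rule closed_subbaseD[OF assms(1) closedin_t1_singleton[OF assms(2,4)]])
    txt \<open>A common point of \<open>?G\<close> lies in every subbase member through \<open>x\<close>, hence in \<open>{x}\<close>.\<close>
    let ?G = "insert S {T \<in> \<S>. x \<in> T}"
    have "linked ?G" unfolding linked_def using no_T assms(7) by auto
    then obtain y where y: "y \<in> \<Inter>?G"
      using binary_familyD[of \<S> ?G] assms(3,5) by auto
    have "y \<in> topspace X"
      using y closedin_subset[OF closed_subbase_closedin[OF assms(1,5)]] by auto
    moreover have "y \<in> U" if U: "U \<in> \<U>" for U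
    proof -
      obtain \<F> where \<F>: "\<F> \<subseteq> \<S>" "U = \<Union>\<F>" using \<U> U by meson
      have "x \<in> topspace X \<inter> \<Inter>\<U>" unfolding x[symmetric] by simp
      with U \<F>(2) obtain T where "T \<in> \<F>" "x \<in> T" by auto
      with y \<F> show ?thesis by auto
    qed
    ultimately have "y \<in> topspace X \<inter> \<Inter>\<U>" by auto
    then have "y = x" unfolding x[symmetric] by simp
    then show False using y assms(6) by simp
  qed
  then show thesis using that by auto
qed

lemma binary_subbase_separating_pair:
  assumes "closed_subbase X \<S>" "t1_space X" "binary_family \<S>"
    and "x \<in> topspace X" "y \<in> topspace X" "x \<noteq> y"
  obtains S0 S1 where "S0 \<in> \<S>" "S1 \<in> \<S>" "x \<in> S0" "y \<in> S1" "S0 \<inter> S1 = {}"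
proof -
  obtain S where S: "S \<in> \<S>" "y \<in> S" "x \<notin> S"
    by (rule closed_subbase_separating[OF assms(1,2,4,5,6)])
  moreover obtain T where "T \<in> \<S>" "x \<in> T" "T \<inter> S = {}"
    using binary_subbase_separating_disjoint[OF assms(1-4) S(1,3)] S(2) by blast
  ultimately show thesis using that by blast
qed

definition gate_family :: "'a set set \<Rightarrow> 'a \<Rightarrow> 'a set \<Rightarrow> 'a set set" where
  "gate_family \<S> p B = {S \<in> \<S>. p \<in> S \<and> S \<inter> B \<noteq> {}} \<union> {S \<in> \<S>. B \<subseteq> S}"

definition gate :: "'a topology \<Rightarrow> 'a set set \<Rightarrow> 'a \<Rightarrow> 'a set \<Rightarrow> 'a" where
  "gate X \<S> p B = (THE x. x \<in> topspace X \<and> x \<in> \<Inter>(gate_family \<S> p B))"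

lemma gate_family_cover:
  assumes "T0 \<in> \<S>" "T1 \<in> \<S>" "T0 \<union> T1 = topspace X" "B \<subseteq> topspace X" "p \<in> topspace X"
  shows "T0 \<in> gate_family \<S> p B \<or> T1 \<in> gate_family \<S> p B"
proof (cases "p \<in> T0")
  case True
  then show ?thesis using assms unfolding gate_family_def by auto
next
  case False
  then have "p \<in> T1" using assms(3,5) by auto
  then show ?thesis using assms unfolding gate_family_def by auto
qed

lemma linked_gate_family: "B \<noteq> {} \<Longrightarrow> linked (gate_family \<S> p B)"
  unfolding linked_def gate_family_def by auto

lemma gate_family_common_point:
  assumes "closed_subbase X \<S>" "binary_family \<S>"
    and "B \<subseteq> topspace X" "B \<noteq> {}" "p \<in> topspace X"
  shows "\<exists>x. x \<in> topspace X \<and> x \<in> \<Inter>(gate_family \<S> p B)"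
proof (cases "gate_family \<S> p B = {}")
  case True
  then show ?thesis using assms(3,4) by auto
next
  case False
  then obtain S where S: "S \<in> gate_family \<S> p B" by auto
  have "gate_family \<S> p B \<subseteq> \<S>" unfolding gate_family_def by auto
  then obtain x where x: "x \<in> \<Inter>(gate_family \<S> p B)"
    using binary_familyD[OF assms(2) _ False linked_gate_family[OF assms(4)]] by auto
  moreover have "S \<subseteq> topspace X"
    using S closedin_subset closed_subbase_closedin[OF assms(1)]
    unfolding gate_family_def by auto
  ultimately show ?thesis using S by auto
qed

lemma gate_family_common_point_unique:
  assumes "closed_subbase X \<S>" "t1_space X" "binary_family \<S>" "normal_family X \<S>"
    and "B \<subseteq> topspace X" "p \<in> topspace X"
    and "x \<in> topspace X" "x \<in> \<Inter>(gate_family \<S> p B)"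
    and "y \<in> topspace X" "y \<in> \<Inter>(gate_family \<S> p B)"
  shows "x = y"
proof (rule ccontr)
  assume "x \<noteq> y"
  then obtain S0 S1 where S: "S0 \<in> \<S>" "S1 \<in> \<S>" "x \<in> S0" "y \<in> S1" "S0 \<inter> S1 = {}"
    by (rule binary_subbase_separating_pair[OF assms(1-3,7,9)])
  obtain T0 T1 where T: "T0 \<in> \<S>" "T1 \<in> \<S>" "S0 \<inter> T1 = {}" "T0 \<inter> S1 = {}"
    "T0 \<union> T1 = topspace X"
    by (rule normal_familyD[OF assms(4) S(1,2,5)])
  from gate_family_cover[OF T(1,2,5) assms(5,6)] show False
  proof
    assume "T0 \<in> gate_family \<S> p B"
    then have "y \<in> T0" using assms(10) by auto
    then show False using S(4) T(4) by auto
  next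
    assume "T1 \<in> gate_family \<S> p B"
    then have "x \<in> T1" using assms(8) by auto
    then show False using S(3) T(3) by auto
  qed
qed

lemma gate_common_point:
  assumes "closed_subbase X \<S>" "t1_space X" "binary_family \<S>" "normal_family X \<S>"
    and "B \<subseteq> topspace X" "B \<noteq> {}" "p \<in> topspace X"
  shows "gate X \<S> p B \<in> topspace X" "gate X \<S> p B \<in> \<Inter>(gate_family \<S> p B)"
proof -
  have "\<exists>!x. x \<in> topspace X \<and> x \<in> \<Inter>(gate_family \<S> p B)"
    using gate_family_common_point[OF assms(1,3,5-7)]
      gate_family_common_point_unique[OF assms(1-5,7)] by auto
  from theI'[OF this] show "gate X \<S> p B \<in> topspace X" "gate X \<S> p B \<in> \<Inter>(gate_family \<S> p B)"
    unfolding gate_def by auto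
qed

lemma gate_in_I_S:
  assumes "closed_subbase X \<S>" "t1_space X" "binary_family \<S>" "normal_family X \<S>"
    and "B \<subseteq> topspace X" "B \<noteq> {}" "p \<in> topspace X"
  shows "gate X \<S> p B \<in> I_S X \<S> B"
  using gate_common_point[OF assms] unfolding I_S_def gate_family_def by auto

lemma S_continuous_gate_family_nhood:
  assumes "S_continuous Z X \<S> \<Phi>" "\<And>z. z \<in> topspace Z \<Longrightarrow> \<Phi> z \<subseteq> topspace X"
    and "T0 \<in> \<S>" "T1 \<in> \<S>" "T0 \<union> T1 = topspace X" "p \<in> topspace X"
    and "z \<in> topspace Z" "T1 \<notin> gate_family \<S> p (\<Phi> z)"
  obtains U where "openin Z U" "z \<in> U" "\<And>z'. z' \<in> U \<Longrightarrow> T0 \<in> gate_family \<S> p (\<Phi> z')"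
proof (cases "p \<in> T1")
  case False
  let ?U = "{z \<in> topspace Z. \<Phi> z \<inter> (topspace X - T1) \<noteq> {}}"
  have "openin Z ?U" using assms(1,4) unfolding S_continuous_def by auto
  moreover have "z \<in> ?U" using assms(2,4,7,8) unfolding gate_family_def by auto
  moreover have "T0 \<in> gate_family \<S> p (\<Phi> z')" if "z' \<in> ?U" for z'
    using that False assms(3,5,6) unfolding gate_family_def by auto
  ultimately show thesis by (rule that)
next
  case True
  let ?U = "{z \<in> topspace Z. \<Phi> z \<subseteq> topspace X - T1}"
  have "openin Z ?U" using assms(1,4) unfolding S_continuous_def by auto
  moreover have "z \<in> ?U" using True assms(2,4,7,8) unfolding gate_family_def by auto
  moreover have "T0 \<in> gate_family \<S> p (\<Phi> z')" if "z' \<in> ?U" for z'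
    using that assms(3,5) unfolding gate_family_def by auto
  ultimately show thesis by (rule that)
qed

lemma openin_gate_notin:
  assumes "closed_subbase X \<S>" "t1_space X" "binary_family \<S>" "normal_family X \<S>"
    and "S_continuous Z X \<S> \<Phi>" "p \<in> topspace X"
    and \<Phi>: "\<And>z. z \<in> topspace Z \<Longrightarrow> \<Phi> z \<subseteq> topspace X \<and> \<Phi> z \<noteq> {}"
    and "S \<in> \<S>"
  shows "openin Z {z \<in> topspace Z. gate X \<S> p (\<Phi> z) \<notin> S}"
proof (cases "S = {}")
  case False
  have gate_z: "gate X \<S> p (\<Phi> z) \<in> topspace X" "gate X \<S> p (\<Phi> z) \<in> \<Inter>(gate_family \<S> p (\<Phi> z))"
    if "z \<in> topspace Z" for z
    using gate_common_point[OF assms(1-4) _ _ assms(6)] \<Phi>[OF that] by auto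
  show ?thesis
  proof (subst openin_subopen, intro ballI)
    fix z assume "z \<in> {z \<in> topspace Z. gate X \<S> p (\<Phi> z) \<notin> S}"
    then have z: "z \<in> topspace Z" "gate X \<S> p (\<Phi> z) \<notin> S" by auto
    obtain T where T: "T \<in> \<S>" "gate X \<S> p (\<Phi> z) \<in> T" "T \<inter> S = {}"
      by (rule binary_subbase_separating_disjoint[OF assms(1-3) gate_z(1)[OF z(1)] assms(8) z(2) False])
    obtain T0 T1 where TT: "T0 \<in> \<S>" "T1 \<in> \<S>" "T \<inter> T1 = {}" "T0 \<inter> S = {}"
      "T0 \<union> T1 = topspace X"
      by (rule normal_familyD[OF assms(4) T(1) assms(8) T(3)])
    have "T1 \<notin> gate_family \<S> p (\<Phi> z)" using gate_z(2)[OF z(1)] T(2) TT(3) by auto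
    then obtain U where U: "openin Z U" "z \<in> U"
      "\<And>z'. z' \<in> U \<Longrightarrow> T0 \<in> gate_family \<S> p (\<Phi> z')"
      using S_continuous_gate_family_nhood[OF assms(5) _ TT(1,2,5) assms(6) z(1)] \<Phi> by auto
    have "U \<subseteq> {z \<in> topspace Z. gate X \<S> p (\<Phi> z) \<notin> S}"
    proof
      fix z' assume "z' \<in> U"
      then have "z' \<in> topspace Z" using openin_subset[OF U(1)] by auto
      then have "gate X \<S> p (\<Phi> z') \<in> T0" using gate_z(2) U(3)[OF \<open>z' \<in> U\<close>] by auto
      with TT(4) \<open>z' \<in> topspace Z\<close> show "z' \<in> {z \<in> topspace Z. gate X \<S> p (\<Phi> z) \<notin> S}"
        by auto
    qed
    with U(1,2) show "\<exists>U. openin Z U \<and> z \<in> U \<and> U \<subseteq> {z \<in> topspace Z. gate X \<S> p (\<Phi> z) \<notin> S}"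
      by auto
  qed
qed simp

lemma continuous_map_gate:
  assumes "closed_subbase X \<S>" "t1_space X" "binary_family \<S>" "normal_family X \<S>"
    and "S_continuous Z X \<S> \<Phi>" "p \<in> topspace X"
    and \<Phi>: "\<And>z. z \<in> topspace Z \<Longrightarrow> \<Phi> z \<subseteq> topspace X \<and> \<Phi> z \<noteq> {}"
  shows "continuous_map Z X (\<lambda>z. gate X \<S> p (\<Phi> z))"
proof (rule continuous_map_closed_subbase[OF assms(1)])
  show "(\<lambda>z. gate X \<S> p (\<Phi> z)) \<in> topspace Z \<rightarrow> topspace X"
    using gate_common_point(1)[OF assms(1-4) _ _ assms(6)] \<Phi> by auto
  fix S assume "S \<in> \<S>"
  have "{z \<in> topspace Z. gate X \<S> p (\<Phi> z) \<in> S}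
      = topspace Z - {z \<in> topspace Z. gate X \<S> p (\<Phi> z) \<notin> S}"
    by auto
  also have "closedin Z \<dots>"
    using openin_gate_notin[OF assms \<open>S \<in> \<S>\<close>] by (rule closedin_diff[OF closedin_topspace])
  finally show "closedin Z {z \<in> topspace Z. gate X \<S> p (\<Phi> z) \<in> S}" .
qed

theorem corollary1p2:
  fixes X :: "'a topology" and Z :: "'z topology"
    and \<S> :: "'a set set" and \<Phi> :: "'z \<Rightarrow> 'a set"
  assumes "tychonoff_space X" and "tychonoff_space Z"
    and "closed_subbase X \<S>" and "binary_family \<S>" and "normal_family X \<S>"
    and "S_continuous Z X \<S> \<Phi>"
    and "\<And>z. z \<in> topspace Z \<Longrightarrow> \<Phi> z \<noteq> {} \<and> closedin X (\<Phi> z)"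
  shows "\<exists>h. continuous_map Z X h \<and> (\<forall>z\<in>topspace Z. h z \<in> I_S X \<S> (\<Phi> z))"
proof (cases "topspace Z = {}")
  case True
  then show ?thesis by (simp add: continuous_map_def)
next
  case False
  have \<Phi>: "\<Phi> z \<subseteq> topspace X \<and> \<Phi> z \<noteq> {}" if "z \<in> topspace Z" for z
    using assms(7)[OF that] closedin_subset by auto
  obtain p where p: "p \<in> topspace X"
    using False \<Phi> by fast
  have t1: "t1_space X"
    using assms(1) Hausdorff_imp_t1_space unfolding tychonoff_space_def by auto
  have "continuous_map Z X (\<lambda>z. gate X \<S> p (\<Phi> z))"
    by (rule continuous_map_gate[OF assms(3) t1 assms(4-6) p \<Phi>])
  moreover have "gate X \<S> p (\<Phi> z) \<in> I_S X \<S> (\<Phi> z)" if "z \<in> topspace Z" for z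
    using gate_in_I_S[OF assms(3) t1 assms(4,5) _ _ p] \<Phi>[OF that] by auto
  ultimately show ?thesis by auto
qed

end
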